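(* Consider the type with a single binary operation. For no regular variety $\mathcal{V}$ of commutative groupoids is the Mal'tsev product $\mathcal{V}\circ\mathcal{S}$ a variety. In particular neither $\mathcal{S}\circ\mathcal{S}$ nor $\mathcal{CG}\circ\mathcal{S}$ is a variety, where $\mathcal{CG}$ is the variety of commutative groupoids.
   Context: An identity is regular if exactly the same variables occur on both sides; a variety is regular if every identity it satisfies is regular. $\mathcal{S}$ is the variety of semilattices (groupoids satisfying all regular identities); it is the smallest regular variety. For a class $\mathcal{V}$ of groupoids, $\mathcal{V}\circ\mathcal{S}$ is the class of all groupoids $A$ having a congruence $\theta$ such that $A/\theta\in\mathcal{S}$ and every $\theta$-class (a subgroupoid) lies in $\mathcal{V}$. *)

theory Defs
  imports Main
begin

datatype gterm = Var nat | Op gterm gterm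

type_synonym gidentity = "gterm \<times> gterm"

fun vars :: "gterm \<Rightarrow> nat set" where
  "vars (Var i) = {i}"
| "vars (Op s t) = vars s \<union> vars t"

definition regular_identity :: "gidentity \<Rightarrow> bool" where
  "regular_identity e \<longleftrightarrow> vars (fst e) = vars (snd e)"

fun eval :: "('a \<Rightarrow> 'a \<Rightarrow> 'a) \<Rightarrow> (nat \<Rightarrow> 'a) \<Rightarrow> gterm \<Rightarrow> 'a" where
  "eval f v (Var i) = v i"
| "eval f v (Op s t) = f (eval f v s) (eval f v t)"

definition groupoid :: "'a set \<Rightarrow> ('a \<Rightarrow> 'a \<Rightarrow> 'a) \<Rightarrow> bool" where
  "groupoid A f \<longleftrightarrow> A \<noteq> {} \<and> (\<forall>x\<in>A. \<forall>y\<in>A. f x y \<in> A)"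

definition satisfies :: "'a set \<Rightarrow> ('a \<Rightarrow> 'a \<Rightarrow> 'a) \<Rightarrow> gidentity \<Rightarrow> bool" where
  "satisfies A f e \<longleftrightarrow> (\<forall>v. (\<forall>i. v i \<in> A) \<longrightarrow> eval f v (fst e) = eval f v (snd e))"

definition models :: "'a set \<Rightarrow> ('a \<Rightarrow> 'a \<Rightarrow> 'a) \<Rightarrow> gidentity set \<Rightarrow> bool" where
  "models A f \<Sigma> \<longleftrightarrow> (\<forall>e\<in>\<Sigma>. satisfies A f e)"

definition in_variety :: "gidentity set \<Rightarrow> 'a set \<Rightarrow> ('a \<Rightarrow> 'a \<Rightarrow> 'a) \<Rightarrow> bool" where
  "in_variety \<Sigma> A f \<longleftrightarrow> groupoid A f \<and> models A f \<Sigma>"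

text \<open>The identities of the variety Mod(\<Sigma>), evaluated over all groupoids whose carrier lies in
  the universe type 'a (for infinite 'a this is the usual equational theory, since relatively
  free algebras on countably many generators are countable).\<close>
definition variety_satisfies :: "'a itself \<Rightarrow> gidentity set \<Rightarrow> gidentity \<Rightarrow> bool" where
  "variety_satisfies TYPE('a) \<Sigma> e \<longleftrightarrow>
     (\<forall>(A::'a set) f. in_variety \<Sigma> A f \<longrightarrow> satisfies A f e)"

definition regular_variety :: "'a itself \<Rightarrow> gidentity set \<Rightarrow> bool" where
  "regular_variety T \<Sigma> \<longleftrightarrow> (\<forall>e. variety_satisfies T \<Sigma> e \<longrightarrow> regular_identity e)"

definition commutativity :: gidentity where
  "commutativity = (Op (Var 0) (Var 1), Op (Var 1) (Var 0))"

definition commutative_variety :: "'a itself \<Rightarrow> gidentity set \<Rightarrow> bool" where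
  "commutative_variety T \<Sigma> \<longleftrightarrow> variety_satisfies T \<Sigma> commutativity"

definition congruence :: "'a set \<Rightarrow> ('a \<Rightarrow> 'a \<Rightarrow> 'a) \<Rightarrow> ('a \<times> 'a) set \<Rightarrow> bool" where
  "congruence A f \<theta> \<longleftrightarrow> equiv A \<theta> \<and>
     (\<forall>a b c d. (a, b) \<in> \<theta> \<longrightarrow> (c, d) \<in> \<theta> \<longrightarrow> (f a c, f b d) \<in> \<theta>)"

definition quot_op :: "('a \<Rightarrow> 'a \<Rightarrow> 'a) \<Rightarrow> ('a \<times> 'a) set \<Rightarrow> 'a set \<Rightarrow> 'a set \<Rightarrow> 'a set" where
  "quot_op f \<theta> X Y = \<theta> `` {f (SOME x. x \<in> X) (SOME y. y \<in> Y)}"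

definition semilattice_groupoid :: "'b set \<Rightarrow> ('b \<Rightarrow> 'b \<Rightarrow> 'b) \<Rightarrow> bool" where
  "semilattice_groupoid A f \<longleftrightarrow> in_variety {e. regular_identity e} A f"

definition in_maltsev_S :: "gidentity set \<Rightarrow> 'a set \<Rightarrow> ('a \<Rightarrow> 'a \<Rightarrow> 'a) \<Rightarrow> bool" where
  "in_maltsev_S \<Sigma> A f \<longleftrightarrow> groupoid A f \<and>
     (\<exists>\<theta>. congruence A f \<theta> \<and>
          semilattice_groupoid (A // \<theta>) (quot_op f \<theta>) \<and>
          (\<forall>a\<in>A. in_variety \<Sigma> (\<theta> `` {a}) f))"

definition is_variety :: "'a itself \<Rightarrow> ('a set \<Rightarrow> ('a \<Rightarrow> 'a \<Rightarrow> 'a) \<Rightarrow> bool) \<Rightarrow> bool" where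
  "is_variety T K \<longleftrightarrow> (\<exists>\<Sigma>'. \<forall>(A::'a set) f. K A f \<longleftrightarrow> in_variety \<Sigma>' A f)"

end

theory Submission
  imports Defs
begin

(* Let G be the groupoid generated by x, y, z whose elements fall into blocks indexed by the
   semilattice {x, y, z, x\<and>y, x\<and>z, 0}, the block map being a homomorphism; each block is a flat
   semilattice (a a = a, a b = bottom of the block). Semilattices satisfy every regular identity,
   so G lies in V \<circ> S. Identifying xy with xz is a homomorphism, so if V \<circ> S were a variety,
   the image H would lie in V \<circ> S. But in a member of V \<circ> S, commutativity of the semilattice
   quotient turns xy = xz into yx \<theta> xy = xz \<theta> zx, and the \<theta>-class of yx is commutative since
   V is; in H, however, (yx)(zx) \<noteq> (zx)(yx). *)

definition semilattice_on :: "'a set \<Rightarrow> ('a \<Rightarrow> 'a \<Rightarrow> 'a) \<Rightarrow> bool" where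
  "semilattice_on A f \<longleftrightarrow>
     (\<forall>a\<in>A. \<forall>b\<in>A. f a b \<in> A) \<and> (\<forall>a\<in>A. \<forall>b\<in>A. f a b = f b a) \<and>
     (\<forall>a\<in>A. \<forall>b\<in>A. \<forall>c\<in>A. f (f a b) c = f a (f b c)) \<and> (\<forall>a\<in>A. f a a = a)"

lemma eval_closed:
  assumes "\<forall>a\<in>A. \<forall>b\<in>A. f a b \<in> A" and "\<forall>i. v i \<in> A"
  shows "eval f v t \<in> A"
  using assms by (induction t) auto

lemma semilattice_on_closed: "semilattice_on A f \<Longrightarrow> a \<in> A \<Longrightarrow> b \<in> A \<Longrightarrow> f a b \<in> A"
  unfolding semilattice_on_def by blast

lemma semilattice_on_commute: "semilattice_on A f \<Longrightarrow> a \<in> A \<Longrightarrow> b \<in> A \<Longrightarrow> f a b = f b a"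
  unfolding semilattice_on_def by blast

lemma semilattice_on_assoc:
  "semilattice_on A f \<Longrightarrow> a \<in> A \<Longrightarrow> b \<in> A \<Longrightarrow> c \<in> A \<Longrightarrow> f (f a b) c = f a (f b c)"
  unfolding semilattice_on_def by blast

lemma semilattice_on_idem: "semilattice_on A f \<Longrightarrow> a \<in> A \<Longrightarrow> f a a = a"
  unfolding semilattice_on_def by blast

lemma eval_absorbs_var:
  assumes sl: "semilattice_on A f" and v: "\<forall>i. v i \<in> A" and "i \<in> vars t"
  shows "f (eval f v t) (v i) = eval f v t"
  using \<open>i \<in> vars t\<close>
proof (induction t)
  case (Var j)
  then show ?case using semilattice_on_idem[OF sl] v by simp
next
  case (Op s u)
  have s: "eval f v s \<in> A" and u: "eval f v u \<in> A" and vi: "v i \<in> A"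
    using eval_closed[of A f v] semilattice_on_closed[OF sl] v by auto
  note comm = semilattice_on_commute[OF sl] and assoc = semilattice_on_assoc[OF sl]
  show ?case
  proof (cases "i \<in> vars s")
    case True
    have "f (f (eval f v s) (eval f v u)) (v i) = f (f (eval f v u) (eval f v s)) (v i)"
      using comm[OF s u] by simp
    also have "\<dots> = f (eval f v u) (f (eval f v s) (v i))" using assoc[OF u s vi] .
    also have "\<dots> = f (eval f v u) (eval f v s)" using Op.IH(1)[OF True] by simp
    also have "\<dots> = f (eval f v s) (eval f v u)" using comm[OF u s] .
    finally show ?thesis by simp
  next
    case False
    then have "i \<in> vars u" using Op.prems by simp
    then show ?thesis using Op.IH(2) assoc[OF s u vi] by simp
  qed
qed

lemma absorbs_eval:
  assumes sl: "semilattice_on A f" and v: "\<forall>i. v i \<in> A" and "x \<in> A"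
    and "\<forall>i\<in>vars t. f x (v i) = x"
  shows "f x (eval f v t) = x"
  using assms(4)
proof (induction t)
  case (Op s u)
  have "eval f v s \<in> A" "eval f v u \<in> A"
    using eval_closed[of A f v] semilattice_on_closed[OF sl] v by auto
  then have "f x (eval f v (Op s u)) = f (f x (eval f v s)) (eval f v u)"
    using semilattice_on_assoc[OF sl \<open>x \<in> A\<close>] by simp
  then show ?case using Op by simp
qed simp

lemma semilattice_on_satisfies_regular:
  assumes sl: "semilattice_on A f" and "regular_identity e"
  shows "satisfies A f e"
  unfolding satisfies_def
proof (intro allI impI)
  fix v :: "nat \<Rightarrow> 'a"
  assume v: "\<forall>i. v i \<in> A"
  obtain s t where e: "e = (s, t)" by (cases e)
  have vars_eq: "vars s = vars t" using \<open>regular_identity e\<close> e by (simp add: regular_identity_def)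
  have s: "eval f v s \<in> A" and t: "eval f v t \<in> A"
    using eval_closed[of A f v] semilattice_on_closed[OF sl] v by auto
  have "f (eval f v s) (eval f v t) = eval f v s"
    using absorbs_eval[OF sl v s] eval_absorbs_var[OF sl v, of _ s] vars_eq by simp
  moreover have "f (eval f v t) (eval f v s) = eval f v t"
    using absorbs_eval[OF sl v t] eval_absorbs_var[OF sl v, of _ t] vars_eq by simp
  ultimately show "eval f v (fst e) = eval f v (snd e)"
    using semilattice_on_commute[OF sl s t] e by simp
qed

lemma in_variety_if_semilattice_on:
  assumes "A \<noteq> {}" and "semilattice_on A f" and "\<forall>e\<in>\<Sigma>. regular_identity e"
  shows "in_variety \<Sigma> A f"
  using assms semilattice_on_satisfies_regular
  unfolding in_variety_def groupoid_def models_def semilattice_on_def by blast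

lemma regular_variety_regular_identities:
  assumes "regular_variety TYPE('a) \<Sigma>" and "e \<in> \<Sigma>"
  shows "regular_identity e"
proof -
  have "variety_satisfies TYPE('a) \<Sigma> e"
    using \<open>e \<in> \<Sigma>\<close> by (auto simp: variety_satisfies_def in_variety_def models_def)
  then show ?thesis using assms(1) unfolding regular_variety_def by blast
qed

lemma satisfies_commutativity_iff:
  "satisfies A f commutativity \<longleftrightarrow> (\<forall>a\<in>A. \<forall>b\<in>A. f a b = f b a)"
proof
  assume sat: "satisfies A f commutativity"
  show "\<forall>a\<in>A. \<forall>b\<in>A. f a b = f b a"
  proof (intro ballI)
    fix a b assume "a \<in> A" "b \<in> A"
    define v where "v i = (if i = 0 then a else b)" for i :: nat
    have "\<forall>i. v i \<in> A" using \<open>a \<in> A\<close> \<open>b \<in> A\<close> by (simp add: v_def)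
    then have "eval f v (fst commutativity) = eval f v (snd commutativity)"
      using sat unfolding satisfies_def by blast
    then show "f a b = f b a" by (simp add: v_def commutativity_def)
  qed
qed (simp add: satisfies_def commutativity_def)

lemma regular_commutativity: "regular_identity commutativity"
  by (auto simp: regular_identity_def commutativity_def)

lemma eval_hom:
  assumes "\<forall>a\<in>A. \<forall>b\<in>A. h (f a b) = g (h a) (h b)"
    and "\<forall>a\<in>A. \<forall>b\<in>A. f a b \<in> A" and "\<forall>i::nat. w i \<in> A"
  shows "h (eval f w t) = eval g (h \<circ> w) t"
  using assms by (induction t) (simp_all add: eval_closed)

lemma in_variety_hom_image:
  assumes V: "in_variety \<Sigma> A f" and im: "h ` A = B"
    and hom: "\<forall>a\<in>A. \<forall>b\<in>A. h (f a b) = g (h a) (h b)"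
  shows "in_variety \<Sigma> B g"
  unfolding in_variety_def models_def
proof (intro conjI ballI)
  have closed: "\<forall>a\<in>A. \<forall>b\<in>A. f a b \<in> A" and "A \<noteq> {}"
    using V by (simp_all add: in_variety_def groupoid_def)
  then show "groupoid B g"
    using im hom by (auto simp: groupoid_def) (metis image_eqI)
  fix e assume "e \<in> \<Sigma>"
  then have sat: "satisfies A f e" using V by (simp add: in_variety_def models_def)
  show "satisfies B g e"
    unfolding satisfies_def
  proof (intro allI impI)
    fix v :: "nat \<Rightarrow> _" assume v: "\<forall>i. v i \<in> B"
    define w where "w i = inv_into A h (v i)" for i
    have w: "\<forall>i. w i \<in> A" and hw: "h \<circ> w = v"
      using v im by (auto simp: w_def inv_into_into f_inv_into_f)
    have "eval f w (fst e) = eval f w (snd e)" using sat w by (simp add: satisfies_def)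
    then show "eval g v (fst e) = eval g v (snd e)"
      using eval_hom[OF hom closed w] hw by metis
  qed
qed

lemma congruence_equiv: "congruence A f \<theta> \<Longrightarrow> equiv A \<theta>"
  by (simp add: congruence_def)

lemma congruence_compat:
  "congruence A f \<theta> \<Longrightarrow> (a, b) \<in> \<theta> \<Longrightarrow> (c, d) \<in> \<theta> \<Longrightarrow> (f a c, f b d) \<in> \<theta>"
  by (simp add: congruence_def)

lemma quot_op_class:
  assumes cong: "congruence A f \<theta>" and "a \<in> A" "b \<in> A"
  shows "quot_op f \<theta> (\<theta> `` {a}) (\<theta> `` {b}) = \<theta> `` {f a b}"
proof -
  have eq: "equiv A \<theta>" using cong by (rule congruence_equiv)
  have "(a, SOME x. x \<in> \<theta> `` {a}) \<in> \<theta>" "(b, SOME y. y \<in> \<theta> `` {b}) \<in> \<theta>"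
    using someI[of "\<lambda>x. x \<in> \<theta> `` {_}"] equiv_class_self[OF eq] assms(2,3) by blast+
  then have "(f a b, f (SOME x. x \<in> \<theta> `` {a}) (SOME y. y \<in> \<theta> `` {b})) \<in> \<theta>"
    using congruence_compat[OF cong] by blast
  then show ?thesis unfolding quot_op_def by (simp add: equiv_class_eq[OF eq])
qed

lemma quotient_semilattice_on:
  assumes cong: "congruence A f \<theta>"
    and closed: "\<forall>a\<in>A. \<forall>b\<in>A. f a b \<in> A"
    and comm: "\<forall>a\<in>A. \<forall>b\<in>A. (f a b, f b a) \<in> \<theta>"
    and assoc: "\<forall>a\<in>A. \<forall>b\<in>A. \<forall>c\<in>A. (f (f a b) c, f a (f b c)) \<in> \<theta>"
    and idem: "\<forall>a\<in>A. (f a a, a) \<in> \<theta>"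
  shows "semilattice_on (A // \<theta>) (quot_op f \<theta>)"
proof -
  have eq: "equiv A \<theta>" using cong by (rule congruence_equiv)
  note q = quot_op_class[OF cong] and cls = eq_equiv_class_iff[OF eq]
  show ?thesis
    unfolding semilattice_on_def
    by (intro conjI ballI; elim quotientE; simp add: q closed quotientI cls comm assoc idem)
qed

lemma kernel_congruence:
  assumes closed: "\<forall>a\<in>A. \<forall>b\<in>A. f a b \<in> A"
    and hom: "\<forall>a\<in>A. \<forall>b\<in>A. c (f a b) = m (c a) (c b)"
  shows "congruence A f {(a, b). a \<in> A \<and> b \<in> A \<and> c a = c b}"
  using assms unfolding congruence_def equiv_def refl_on_def sym_def trans_def by auto

lemma in_maltsev_S_if_semilattice_hom:
  assumes gr: "groupoid A f" and sl: "semilattice m"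
    and hom: "\<forall>a\<in>A. \<forall>b\<in>A. c (f a b) = m (c a) (c b)"
    and fibres: "\<forall>a\<in>A. in_variety \<Sigma> {b \<in> A. c b = c a} f"
  shows "in_maltsev_S \<Sigma> A f"
proof -
  interpret m: semilattice m by (rule sl)
  define \<theta> where "\<theta> = {(a, b). a \<in> A \<and> b \<in> A \<and> c a = c b}"
  have closed: "\<forall>a\<in>A. \<forall>b\<in>A. f a b \<in> A" and "A \<noteq> {}" using gr by (simp_all add: groupoid_def)
  have cong: "congruence A f \<theta>" unfolding \<theta>_def using closed hom by (rule kernel_congruence)
  have "semilattice_on (A // \<theta>) (quot_op f \<theta>)"
    using cong closed
  proof (rule quotient_semilattice_on)
    show "\<forall>a\<in>A. \<forall>b\<in>A. (f a b, f b a) \<in> \<theta>"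
      using closed hom m.commute by (simp add: \<theta>_def)
    show "\<forall>a\<in>A. \<forall>b\<in>A. \<forall>c\<in>A. (f (f a b) c, f a (f b c)) \<in> \<theta>"
      using closed hom m.assoc by (simp add: \<theta>_def)
    show "\<forall>a\<in>A. (f a a, a) \<in> \<theta>"
      using closed hom m.idem by (simp add: \<theta>_def)
  qed
  then have "semilattice_groupoid (A // \<theta>) (quot_op f \<theta>)"
    unfolding semilattice_groupoid_def using \<open>A \<noteq> {}\<close>
    by (intro in_variety_if_semilattice_on) (auto simp: quotient_def)
  moreover have "\<theta> `` {a} = {b \<in> A. c b = c a}" if "a \<in> A" for a
    using that by (auto simp: \<theta>_def)
  ultimately show ?thesis
    unfolding in_maltsev_S_def using gr cong fibres by auto
qed

lemma semilattice_quotient_commute: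
  assumes cong: "congruence A f \<theta>" and closed: "\<forall>a\<in>A. \<forall>b\<in>A. f a b \<in> A"
    and sl: "semilattice_groupoid (A // \<theta>) (quot_op f \<theta>)" and "a \<in> A" "b \<in> A"
  shows "(f a b, f b a) \<in> \<theta>"
proof -
  have "satisfies (A // \<theta>) (quot_op f \<theta>) commutativity"
    using sl regular_commutativity
    unfolding semilattice_groupoid_def in_variety_def models_def by blast
  then have "quot_op f \<theta> (\<theta> `` {a}) (\<theta> `` {b}) = quot_op f \<theta> (\<theta> `` {b}) (\<theta> `` {a})"
    using assms(4,5) by (simp add: satisfies_commutativity_iff quotientI)
  then have "\<theta> `` {f a b} = \<theta> `` {f b a}" using quot_op_class[OF cong] assms(4,5) by simp
  then show ?thesis using eq_equiv_class_iff[OF congruence_equiv[OF cong]] closed assms(4,5) by blast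
qed

lemma in_maltsev_S_products_commute:
  fixes B :: "'a set"
  assumes M: "in_maltsev_S \<Sigma> B g" and C: "commutative_variety TYPE('a) \<Sigma>"
    and B: "x \<in> B" "y \<in> B" "z \<in> B" and eq: "g x y = g x z"
  shows "g (g y x) (g z x) = g (g z x) (g y x)"
proof -
  obtain \<theta> where cong: "congruence B g \<theta>"
    and sl: "semilattice_groupoid (B // \<theta>) (quot_op g \<theta>)"
    and fibres: "\<forall>a\<in>B. in_variety \<Sigma> (\<theta> `` {a}) g"
    using M unfolding in_maltsev_S_def by blast
  have closed: "\<forall>a\<in>B. \<forall>b\<in>B. g a b \<in> B" using M by (simp add: in_maltsev_S_def groupoid_def)
  have eqv: "equiv B \<theta>" using cong by (rule congruence_equiv)
  have tr: "trans \<theta>" using eqv by (simp add: equiv_def)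
  note commute = semilattice_quotient_commute[OF cong closed sl]
  have "(g y x, g z x) \<in> \<theta>"
    using commute[of y x] commute[of x z] eq B transD[OF tr] by metis
  then have "g y x \<in> \<theta> `` {g y x}" and "g z x \<in> \<theta> `` {g y x}"
    using equiv_class_self[OF eqv] closed B by auto
  moreover have "satisfies (\<theta> `` {g y x}) g commutativity"
    using C fibres closed B unfolding commutative_variety_def variety_satisfies_def by blast
  ultimately show ?thesis by (simp add: satisfies_commutativity_iff)
qed

(* Varieties here are classes of groupoids on 'a, so the finite example is copied into 'a along
   an injection. *)
definition transfer_op :: "('b \<Rightarrow> 'a) \<Rightarrow> ('b \<Rightarrow> 'b \<Rightarrow> 'b) \<Rightarrow> 'a \<Rightarrow> 'a \<Rightarrow> 'a" where
  "transfer_op \<iota> f u w = \<iota> (f (inv \<iota> u) (inv \<iota> w))"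

lemma transfer_op_image [simp]: "inj \<iota> \<Longrightarrow> transfer_op \<iota> f (\<iota> a) (\<iota> b) = \<iota> (f a b)"
  by (simp add: transfer_op_def)

lemma semilattice_on_transfer:
  "inj \<iota> \<Longrightarrow> semilattice_on S f \<Longrightarrow> semilattice_on (\<iota> ` S) (transfer_op \<iota> f)"
  by (auto simp: semilattice_on_def)

lemma flat_semilattice_on:
  assumes "z \<in> S" and "\<forall>a\<in>S. \<forall>b\<in>S. f a b = (if a = b then a else z)"
  shows "semilattice_on S f"
  using assms unfolding semilattice_on_def by auto

lemma inj_into_infinite:
  assumes "infinite (UNIV :: 'a set)"
  shows "\<exists>\<iota> :: 'b::finite \<Rightarrow> 'a. inj \<iota>"
proof -
  obtain S :: "'a set" where "finite S" "card S = card (UNIV :: 'b set)"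
    using infinite_arbitrarily_large[OF assms] by blast
  then show ?thesis using card_le_inj[of "UNIV :: 'b set" S] by auto
qed

(* Gxy, Gyx, Gxz, Gzx, Gyxzx, Gzxyx stand for xy, yx, xz, zx, (yx)(zx), (zx)(yx); Oxy, Oxz, O0 are
   the bottoms of the blocks x\<and>y, x\<and>z, 0, and Gp is the common image of xy and xz under collapse.
   Products of distinct elements among Gxy, Gxz, Gp are set to Gp so that collapse is a homomorphism. *)
datatype ex_elem = Gx | Gy | Gz | Gxy | Gyx | Oxy | Gxz | Gzx | Oxz | Gp | Gyxzx | Gzxyx | O0

instance ex_elem :: finite
proof
  have "(UNIV :: ex_elem set) = {Gx, Gy, Gz, Gxy, Gyx, Oxy, Gxz, Gzx, Oxz, Gp, Gyxzx, Gzxyx, O0}"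
    using ex_elem.exhaust by auto
  then show "finite (UNIV :: ex_elem set)" by (metis finite.emptyI finite_insert)
qed

datatype ex_block = Kx | Ky | Kz | Kxy | Kxz | K0

fun block_of :: "ex_elem \<Rightarrow> ex_block" where
  "block_of Gx = Kx" | "block_of Gy = Ky" | "block_of Gz = Kz"
| "block_of Gxy = Kxy" | "block_of Gyx = Kxy" | "block_of Oxy = Kxy"
| "block_of Gxz = Kxz" | "block_of Gzx = Kxz" | "block_of Oxz = Kxz"
| "block_of Gp = K0" | "block_of Gyxzx = K0" | "block_of Gzxyx = K0" | "block_of O0 = K0"

definition block_meet :: "ex_block \<Rightarrow> ex_block \<Rightarrow> ex_block" where
  "block_meet k l =
     (if k = l then k
      else if {k, l} \<subseteq> {Kx, Ky, Kxy} then Kxy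
      else if {k, l} \<subseteq> {Kx, Kz, Kxz} then Kxz
      else K0)"

fun block_bot :: "ex_block \<Rightarrow> ex_elem" where
  "block_bot Kx = Gx" | "block_bot Ky = Gy" | "block_bot Kz = Gz"
| "block_bot Kxy = Oxy" | "block_bot Kxz = Oxz" | "block_bot K0 = O0"

definition ex_mul :: "ex_elem \<Rightarrow> ex_elem \<Rightarrow> ex_elem" where
  "ex_mul a b =
     (if a = b then a
      else if (a, b) = (Gx, Gy) then Gxy else if (a, b) = (Gy, Gx) then Gyx
      else if (a, b) = (Gx, Gz) then Gxz else if (a, b) = (Gz, Gx) then Gzx
      else if (a, b) = (Gyx, Gzx) then Gyxzx else if (a, b) = (Gzx, Gyx) then Gzxyx
      else if a \<in> {Gxy, Gxz, Gp} \<and> b \<in> {Gxy, Gxz, Gp} then Gp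
      else block_bot (block_meet (block_of a) (block_of b)))"

fun collapse :: "ex_elem \<Rightarrow> ex_elem" where
  "collapse Gxy = Gp" | "collapse Gxz = Gp" | "collapse Oxy = O0" | "collapse Oxz = O0"
| "collapse a = a"

definition collapsed_mul :: "ex_elem \<Rightarrow> ex_elem \<Rightarrow> ex_elem" where
  "collapsed_mul a b = collapse (ex_mul a b)"

lemma semilattice_block_meet: "semilattice block_meet"
proof
  fix k l n
  show "block_meet (block_meet k l) n = block_meet k (block_meet l n)"
    by (cases k; cases l; cases n) (simp_all add: block_meet_def)
  show "block_meet k l = block_meet l k"
    by (cases k; cases l) (simp_all add: block_meet_def)
  show "block_meet k k = k"
    by (simp add: block_meet_def)
qed

lemma block_of_ex_mul: "block_of (ex_mul a b) = block_meet (block_of a) (block_of b)"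
  by (cases a; cases b) (simp_all add: ex_mul_def block_meet_def)

lemma ex_mul_same_block:
  "block_of a = block_of b \<Longrightarrow> ex_mul a b = (if a = b then a else block_bot (block_of a))"
  by (cases a; cases b) (simp_all add: ex_mul_def block_meet_def)

lemma block_of_block_bot: "block_of (block_bot k) = k"
  by (cases k) simp_all

lemma semilattice_on_block: "semilattice_on {a. block_of a = k} ex_mul"
  by (rule flat_semilattice_on[where z = "block_bot k"]) (simp_all add: block_of_block_bot ex_mul_same_block)

lemma collapse_ex_mul: "collapse (ex_mul a b) = collapsed_mul (collapse a) (collapse b)"
  by (cases a; cases b) (simp_all add: collapsed_mul_def ex_mul_def block_meet_def)

lemma ex_in_maltsev_S:
  fixes \<iota> :: "ex_elem \<Rightarrow> 'a"
  assumes inj: "inj \<iota>" and reg: "\<forall>e\<in>\<Sigma>. regular_identity e"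
  shows "in_maltsev_S \<Sigma> (range \<iota>) (transfer_op \<iota> ex_mul)"
proof (rule in_maltsev_S_if_semilattice_hom[where c = "block_of \<circ> inv \<iota>", OF _ semilattice_block_meet])
  show "groupoid (range \<iota>) (transfer_op \<iota> ex_mul)"
    using inj by (auto simp: groupoid_def)
  show "\<forall>a\<in>range \<iota>. \<forall>b\<in>range \<iota>. (block_of \<circ> inv \<iota>) (transfer_op \<iota> ex_mul a b) =
          block_meet ((block_of \<circ> inv \<iota>) a) ((block_of \<circ> inv \<iota>) b)"
    using inj by (auto simp: block_of_ex_mul)
  show "\<forall>a\<in>range \<iota>. in_variety \<Sigma> {b \<in> range \<iota>. (block_of \<circ> inv \<iota>) b = (block_of \<circ> inv \<iota>) a}
          (transfer_op \<iota> ex_mul)"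
  proof
    fix a assume "a \<in> range \<iota>"
    then obtain d where "a = \<iota> d" by blast
    then have "{b \<in> range \<iota>. (block_of \<circ> inv \<iota>) b = (block_of \<circ> inv \<iota>) a} =
               \<iota> ` {e. block_of e = block_of d}"
      using inj by auto
    then show "in_variety \<Sigma> {b \<in> range \<iota>. (block_of \<circ> inv \<iota>) b = (block_of \<circ> inv \<iota>) a}
                 (transfer_op \<iota> ex_mul)"
      using in_variety_if_semilattice_on[OF _ semilattice_on_transfer[OF inj semilattice_on_block] reg]
      by auto
  qed
qed

lemma collapsed_in_variety:
  fixes \<iota> :: "ex_elem \<Rightarrow> 'a"
  assumes inj: "inj \<iota>" and "in_variety \<Sigma> (range \<iota>) (transfer_op \<iota> ex_mul)"
  shows "in_variety \<Sigma> (\<iota> ` range collapse) (transfer_op \<iota> collapsed_mul)"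
  using assms(2)
  by (rule in_variety_hom_image[where h = "\<iota> \<circ> collapse \<circ> inv \<iota>"])
    (auto simp: inj collapse_ex_mul image_comp)

lemma collapsed_not_in_maltsev_S:
  fixes \<iota> :: "ex_elem \<Rightarrow> 'a"
  assumes inj: "inj \<iota>" and comm: "commutative_variety TYPE('a) \<Sigma>"
  shows "\<not> in_maltsev_S \<Sigma> (\<iota> ` range collapse) (transfer_op \<iota> collapsed_mul)"
proof
  assume M: "in_maltsev_S \<Sigma> (\<iota> ` range collapse) (transfer_op \<iota> collapsed_mul)"
  have gens: "\<iota> Gx \<in> \<iota> ` range collapse" "\<iota> Gy \<in> \<iota> ` range collapse" "\<iota> Gz \<in> \<iota> ` range collapse"
    by (metis collapse.simps rangeI image_eqI)+
  have "transfer_op \<iota> collapsed_mul (\<iota> Gx) (\<iota> Gy) = transfer_op \<iota> collapsed_mul (\<iota> Gx) (\<iota> Gz)"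
    using inj by (simp add: collapsed_mul_def ex_mul_def)
  from in_maltsev_S_products_commute[OF M comm gens this]
  have "\<iota> Gyxzx = \<iota> Gzxyx" using inj by (simp add: collapsed_mul_def ex_mul_def)
  then show False using inj by (simp add: inj_eq)
qed

theorem corollary4p16:
  fixes \<Sigma> :: "gidentity set"
  assumes "infinite (UNIV :: 'a set)"
    and "regular_variety TYPE('a) \<Sigma>"
    and "commutative_variety TYPE('a) \<Sigma>"
  shows "\<not> is_variety TYPE('a) (in_maltsev_S \<Sigma>)"
proof
  assume "is_variety TYPE('a) (in_maltsev_S \<Sigma>)"
  then obtain \<Sigma>' where K: "\<And>(A :: 'a set) f. in_maltsev_S \<Sigma> A f \<longleftrightarrow> in_variety \<Sigma>' A f"
    unfolding is_variety_def by blast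
  obtain \<iota> :: "ex_elem \<Rightarrow> 'a" where inj: "inj \<iota>"
    using inj_into_infinite[OF assms(1)] by blast
  have "in_maltsev_S \<Sigma> (range \<iota>) (transfer_op \<iota> ex_mul)"
    using ex_in_maltsev_S[OF inj] regular_variety_regular_identities[OF assms(2)] by blast
  then have "in_variety \<Sigma>' (\<iota> ` range collapse) (transfer_op \<iota> collapsed_mul)"
    using collapsed_in_variety[OF inj] K by blast
  then show False
    using collapsed_not_in_maltsev_S[OF inj assms(3)] K by blast
qed

end
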